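(* Let $(X,d)$ be a metric space, let $k\geq 1$, let $p_1,\dots,p_k\in X$ and put $D=X\setminus\{p_1,\dots,p_k\}$. Define on $D$ $$\hat\tau_D(x,y)=\frac1k\sum_{i=1}^k\log\Big(1+2\frac{d(x,y)}{\sqrt{d(x,p_i)d(y,p_i)}}\Big),\qquad \tilde\tau_D(x,y)=\frac1k\sum_{i=1}^k\log\Big(1+\frac{d(x,y)}{\sqrt{d(x,p_i)d(y,p_i)}}\Big).$$ Then the space $(D,\hat\tau_D)$ is Gromov hyperbolic with $\delta=3\log 3+\log 2$, i.e. for all $x,y,z,v\in D$, $$\hat\tau_D(x,y)+\hat\tau_D(z,v)\leq \max\{\hat\tau_D(x,z)+\hat\tau_D(y,v),\ \hat\tau_D(x,v)+\hat\tau_D(y,z)\}+2\delta.$$ In particular, if $(X,d)$ is Ptolemaic, then the space $(D,\tilde\tau_D)$ is Gromov hyperbolic with $\delta=3\log 3$ (i.e. $\tilde\tau_D$ satisfies the same four-point inequality with $\delta=3\log 3$).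
   Context: A metric space $(X,d)$ is Ptolemaic if $d(x,y)d(z,w)\leq d(x,z)d(y,w)+d(x,w)d(y,z)$ for all $x,y,z,w\in X$. A space $(Y,\rho)$ is Gromov hyperbolic with constant $\delta\ge 0$ if $\rho(x,y)+\rho(z,v)\leq \max\{\rho(x,z)+\rho(y,v),\ \rho(x,v)+\rho(y,z)\}+2\delta$ for all $x,y,z,v\in Y$. *)

theory Defs
  imports "HOL-Analysis.Analysis"
begin

definition ptolemaic :: "'a set \<Rightarrow> ('a \<Rightarrow> 'a \<Rightarrow> real) \<Rightarrow> bool" where
  "ptolemaic X d \<longleftrightarrow> (\<forall>x\<in>X. \<forall>y\<in>X. \<forall>z\<in>X. \<forall>w\<in>X.
      d x y * d z w \<le> d x z * d y w + d x w * d y z)"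

definition gromov_hyperbolic :: "'a set \<Rightarrow> ('a \<Rightarrow> 'a \<Rightarrow> real) \<Rightarrow> real \<Rightarrow> bool" where
  "gromov_hyperbolic Y \<rho> \<delta> \<longleftrightarrow> \<delta> \<ge> 0 \<and> (\<forall>x\<in>Y. \<forall>y\<in>Y. \<forall>z\<in>Y. \<forall>v\<in>Y.
      \<rho> x y + \<rho> z v \<le> max (\<rho> x z + \<rho> y v) (\<rho> x v + \<rho> y z) + 2 * \<delta>)"

definition tau_hat :: "('a \<Rightarrow> 'a \<Rightarrow> real) \<Rightarrow> nat \<Rightarrow> (nat \<Rightarrow> 'a) \<Rightarrow> 'a \<Rightarrow> 'a \<Rightarrow> real" where
  "tau_hat d k p x y = (1 / real k) *
     (\<Sum>i=1..k. ln (1 + 2 * d x y / sqrt (d x (p i) * d y (p i))))"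

definition tau_tilde :: "('a \<Rightarrow> 'a \<Rightarrow> real) \<Rightarrow> nat \<Rightarrow> (nat \<Rightarrow> 'a) \<Rightarrow> 'a \<Rightarrow> 'a \<Rightarrow> real" where
  "tau_tilde d k p x y = (1 / real k) *
     (\<Sum>i=1..k. ln (1 + d x y / sqrt (d x (p i) * d y (p i))))"

end

theory Submission
  imports Defs
begin

text \<open>For a base point p write u(x,y) = d(x,y) / sqrt(d(x,p) d(y,p)). The triangle inequality
gives the quasi-multiplicative triangle inequality 1 + u(x,y) \<le> 2 (1 + u(x,z)) (1 + u(z,y)), and
for a quadruple with d(x,v) d(y,z) \<le> d(x,z) d(y,v) it also gives
u(x,y) u(z,v) \<le> 4 u(x,z) u(y,v). Together these yield
(1 + u(x,y)) (1 + u(z,v)) \<le> 16 (1 + u(x,z)) (1 + u(y,v)); taking logarithms of the scaled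
quantities 1 + c u with c \<ge> 1 and averaging over the base points shows that the average of
ln (1 + c u) is Gromov hyperbolic with \<delta> = ln (4 c). For c = 2 and c = 1 this gives ln 8 and
ln 4, below the stated constants.\<close>

lemma mult_diff_le_of_square_diff_le:
  fixes g b D :: real
  assumes "0 < g" "0 < b" "0 \<le> D" "g\<^sup>2 - b\<^sup>2 \<le> D"
  shows "g * (g - b) \<le> D"
proof (cases "b \<le> g")
  case True
  have "g * (g - b) \<le> (g + b) * (g - b)" using True assms by (intro mult_right_mono) auto
  also have "\<dots> = g\<^sup>2 - b\<^sup>2" by (simp add: power2_eq_square algebra_simps)
  finally show ?thesis using assms by linarith
next
  case False
  then show ?thesis using assms mult_pos_neg[of g "g - b"] by linarith
qed

lemma quasi_triangle_real:
  fixes a b g Dxy Dxz Dzy :: real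
  assumes "0 < a" "0 < b" "0 < g" "0 \<le> Dxz" "0 \<le> Dzy"
    and "Dxy \<le> Dxz + Dzy" "g\<^sup>2 - b\<^sup>2 \<le> Dzy" "g\<^sup>2 - a\<^sup>2 \<le> Dxz"
  shows "1 + Dxy / (a * b) \<le> 2 * (1 + Dxz / (a * g)) * (1 + Dzy / (g * b))"
proof -
  have "Dxz * (g * (g - b)) \<le> Dxz * Dzy"
    using assms by (intro mult_left_mono mult_diff_le_of_square_diff_le) auto
  moreover have "Dzy * (g * (g - a)) \<le> Dzy * Dxz"
    using assms by (intro mult_left_mono mult_diff_le_of_square_diff_le) auto
  moreover have "Dxy * g\<^sup>2 \<le> (Dxz + Dzy) * g\<^sup>2" using assms by (intro mult_right_mono) auto
  ultimately have main: "Dxy * g\<^sup>2 \<le> Dxz * g * b + Dzy * g * a + 2 * Dxz * Dzy"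
    by (simp add: algebra_simps power2_eq_square)
  have "Dxy / (a * b) = Dxy * g\<^sup>2 / (a * g * g * b)"
    using assms by (simp add: field_simps power2_eq_square)
  also have "\<dots> \<le> (Dxz * g * b + Dzy * g * a + 2 * Dxz * Dzy) / (a * g * g * b)"
    using main assms by (intro divide_right_mono) auto
  also have "\<dots> = Dxz / (a * g) + Dzy / (g * b) + 2 * ((Dxz / (a * g)) * (Dzy / (g * b)))"
    using assms by (simp add: field_simps)
  finally have "Dxy / (a * b) \<le> Dxz / (a * g) + Dzy / (g * b) + 2 * ((Dxz / (a * g)) * (Dzy / (g * b)))" .
  moreover have "2 * (1 + A) * (1 + B) = 2 + 2 * A + 2 * B + 2 * (A * B)" for A B :: real
    by (simp add: algebra_simps)
  moreover have "0 \<le> Dxz / (a * g)" "0 \<le> Dzy / (g * b)" using assms by auto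
  ultimately show ?thesis by (smt (verit))
qed

text \<open>The smallest of the four distances d(x,z), d(x,v), d(y,z), d(y,v) controls both
d(x,y) and d(z,v) through the triangle inequality.\<close>

lemma product_le_four_times_cross_product:
  fixes dxy dzv dxz dyv dxv dyz :: real
  assumes "0 \<le> dxy" "0 \<le> dzv"
    and "dxy \<le> dxz + dyz" "dxy \<le> dxv + dyv" "dzv \<le> dxz + dxv" "dzv \<le> dyz + dyv"
    and cross: "dxv * dyz \<le> dxz * dyv"
  shows "dxy * dzv \<le> 4 * (dxz * dyv)"
proof -
  have bound: "dxy * dzv \<le> 4 * (s * t)" if "dxy \<le> 2 * s" "dzv \<le> 2 * t" for s t
  proof -
    have "dxy * dzv \<le> (2 * s) * (2 * t)" using that assms(1,2) by (intro mult_mono) auto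
    then show ?thesis by simp
  qed
  consider "dxy \<le> 2 * dyz" "dzv \<le> 2 * dxv" | "dxy \<le> 2 * dyv" "dzv \<le> 2 * dxz"
    | "dxy \<le> 2 * dxz" "dzv \<le> 2 * dyv" | "dxy \<le> 2 * dxv" "dzv \<le> 2 * dyz"
    using assms by linarith
  then show ?thesis
  proof cases
    case 1
    with bound[of dyz dxv] cross show ?thesis by (simp add: mult.commute)
  next
    case 2
    with bound[of dyv dxz] show ?thesis by (simp add: mult.commute)
  next
    case 3
    with bound[of dxz dyv] show ?thesis by simp
  next
    case 4
    with bound[of dxv dyz] cross show ?thesis by simp
  qed
qed

lemma one_plus_product_le:
  fixes uxy uzv uxz uyv :: real
  assumes "0 \<le> uxy" "0 \<le> uzv" "0 \<le> uxz" "0 \<le> uyv"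
    and xy: "1 + uxy \<le> 4 * ((1 + uxz) * (1 + uyv)) * (1 + uzv)"
    and zv: "1 + uzv \<le> 4 * ((1 + uxz) * (1 + uyv)) * (1 + uxy)"
    and prod: "uxy * uzv \<le> 4 * (uxz * uyv)"
  shows "(1 + uxy) * (1 + uzv) \<le> 16 * ((1 + uxz) * (1 + uyv))"
proof -
  define Q where "Q = (1 + uxz) * (1 + uyv)"
  have Q: "uxz * uyv \<le> Q" "1 \<le> Q" using assms unfolding Q_def by (auto simp: algebra_simps)
  consider "uxy < 1" | "uzv < 1" | "1 \<le> uxy" "1 \<le> uzv" by linarith
  then show ?thesis
  proof cases
    case 1
    have "(1 + uxy) * (1 + uzv) \<le> 2 * (1 + uzv)" using 1 assms by (intro mult_right_mono) auto
    also have "\<dots> \<le> 2 * (4 * Q * (1 + uxy))" using zv unfolding Q_def by simp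
    also have "\<dots> \<le> 2 * (4 * Q * 2)" using 1 Q by (simp add: mult_left_mono)
    finally show ?thesis unfolding Q_def by linarith
  next
    case 2
    have "(1 + uxy) * (1 + uzv) \<le> (1 + uxy) * 2" using 2 assms by (intro mult_left_mono) auto
    also have "\<dots> \<le> (4 * Q * (1 + uzv)) * 2" using xy unfolding Q_def by simp
    also have "\<dots> \<le> (4 * Q * 2) * 2" using 2 Q by (simp add: mult_left_mono)
    finally show ?thesis unfolding Q_def by linarith
  next
    case 3
    have "(1 + uxy) * (1 + uzv) \<le> (2 * uxy) * (2 * uzv)" using 3 by (intro mult_mono) auto
    then show ?thesis using prod Q unfolding Q_def by linarith
  qed
qed

lemma ln_one_plus_scaled_le:
  fixes a b a' b' c :: real
  assumes "0 \<le> a" "0 \<le> b" "0 \<le> a'" "0 \<le> b'" "1 \<le> c"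
    and le16: "(1 + a) * (1 + b) \<le> 16 * ((1 + a') * (1 + b'))"
  shows "ln (1 + c * a) + ln (1 + c * b) \<le> ln (1 + c * a') + ln (1 + c * b') + 2 * ln (4 * c)"
proof -
  have pos: "0 < 1 + c * t" if "0 \<le> t" for t using that assms by (simp add: add_pos_nonneg)
  have "(1 + c * a) * (1 + c * b) \<le> (c * (1 + a)) * (c * (1 + b))"
    using assms by (intro mult_mono) (auto simp: algebra_simps)
  also have "\<dots> = c * c * ((1 + a) * (1 + b))" by (simp add: algebra_simps)
  also have "\<dots> \<le> c * c * (16 * ((1 + a') * (1 + b')))" using le16 by (intro mult_left_mono) auto
  also have "\<dots> \<le> c * c * (16 * ((1 + c * a') * (1 + c * b')))"
    using assms by (intro mult_left_mono mult_mono) (auto simp: mult_le_cancel_right1)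
  also have "\<dots> = 4 * c * (4 * c * ((1 + c * a') * (1 + c * b')))" by (simp add: algebra_simps)
  finally have "ln ((1 + c * a) * (1 + c * b)) \<le> ln (4 * c * (4 * c * ((1 + c * a') * (1 + c * b'))))"
    using pos assms by (intro ln_mono mult_pos_pos) auto
  then show ?thesis
    using pos assms ln_realpow[of 4 2] by (simp add: ln_mult_pos mult_pos_pos)
qed

definition inv_dist :: "('a \<Rightarrow> 'a \<Rightarrow> real) \<Rightarrow> 'a \<Rightarrow> 'a \<Rightarrow> 'a \<Rightarrow> real" where
  "inv_dist d p x y = d x y / sqrt (d x p * d y p)"

context Metric_space
begin

lemma inv_dist_commute: "inv_dist d p x y = inv_dist d p y x"
  unfolding inv_dist_def by (simp add: commute mult.commute)

lemma inv_dist_nonneg: "0 \<le> inv_dist d p x y"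
  unfolding inv_dist_def by simp

lemma dist_pos_of_ne: "x \<in> M \<Longrightarrow> p \<in> M \<Longrightarrow> x \<noteq> p \<Longrightarrow> 0 < d x p"
  using nonneg zero by (metis less_eq_real_def)

lemma inv_dist_quasi_triangle:
  assumes "x \<in> M" "y \<in> M" "z \<in> M" "p \<in> M" "x \<noteq> p" "y \<noteq> p" "z \<noteq> p"
  shows "1 + inv_dist d p x y \<le> 2 * (1 + inv_dist d p x z) * (1 + inv_dist d p z y)"
proof -
  define a b g where "a = sqrt (d x p)" "b = sqrt (d y p)" "g = sqrt (d z p)"
  have "0 < d x p" "0 < d y p" "0 < d z p" using assms dist_pos_of_ne by auto
  then have "0 < a" "0 < b" "0 < g" and sq: "a\<^sup>2 = d x p" "b\<^sup>2 = d y p" "g\<^sup>2 = d z p"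
    unfolding a_b_g_def by auto
  moreover have "d x y \<le> d x z + d z y" using assms triangle by blast
  moreover have "g\<^sup>2 - b\<^sup>2 \<le> d z y" using sq assms triangle[of z y p] by simp
  moreover have "g\<^sup>2 - a\<^sup>2 \<le> d x z" using sq assms triangle[of z x p] commute[of z x] by simp
  ultimately have "1 + d x y / (a * b) \<le> 2 * (1 + d x z / (a * g)) * (1 + d z y / (g * b))"
    using quasi_triangle_real nonneg by blast
  then show ?thesis unfolding inv_dist_def a_b_g_def by (simp add: real_sqrt_mult)
qed

lemma inv_dist_product_le:
  assumes "x \<in> M" "y \<in> M" "z \<in> M" "v \<in> M" "p \<in> M"
    and "x \<noteq> p" "y \<noteq> p" "z \<noteq> p" "v \<noteq> p"
    and "d x v * d y z \<le> d x z * d y v"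
  shows "inv_dist d p x y * inv_dist d p z v \<le> 4 * (inv_dist d p x z * inv_dist d p y v)"
proof -
  define s where "s = sqrt (d x p) * sqrt (d y p) * sqrt (d z p) * sqrt (d v p)"
  have "0 < s" unfolding s_def using assms dist_pos_of_ne by auto
  have "d x y * d z v \<le> 4 * (d x z * d y v)"
  proof (rule product_le_four_times_cross_product)
    show "d x y \<le> d x z + d y z" using triangle[of x z y] assms commute[of z y] by simp
    show "d x y \<le> d x v + d y v" using triangle[of x v y] assms commute[of v y] by simp
    show "d z v \<le> d x z + d x v" using triangle[of z x v] assms commute[of z x] by simp
    show "d z v \<le> d y z + d y v" using triangle[of z y v] assms commute[of z y] by simp
  qed (use assms in auto)
  then have "d x y * d z v / s \<le> 4 * (d x z * d y v) / s"
    using \<open>0 < s\<close> by (intro divide_right_mono) auto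
  then show ?thesis unfolding inv_dist_def s_def by (simp add: real_sqrt_mult field_simps)
qed

lemma inv_dist_four_point:
  assumes "x \<in> M" "y \<in> M" "z \<in> M" "v \<in> M" "p \<in> M"
    and "x \<noteq> p" "y \<noteq> p" "z \<noteq> p" "v \<noteq> p"
    and "d x v * d y z \<le> d x z * d y v"
  shows "(1 + inv_dist d p x y) * (1 + inv_dist d p z v)
    \<le> 16 * ((1 + inv_dist d p x z) * (1 + inv_dist d p y v))"
proof (rule one_plus_product_le)
  let ?u = "inv_dist d p"
  have q1: "1 + ?u x y \<le> 2 * (1 + ?u x z) * (1 + ?u z y)"
    and q2: "1 + ?u z y \<le> 2 * (1 + ?u z v) * (1 + ?u v y)"
    and q3: "1 + ?u z v \<le> 2 * (1 + ?u z x) * (1 + ?u x v)"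
    and q4: "1 + ?u x v \<le> 2 * (1 + ?u x y) * (1 + ?u y v)"
    using assms by (blast intro: inv_dist_quasi_triangle)+
  have "2 * (1 + ?u x z) * (1 + ?u z y) \<le> 2 * (1 + ?u x z) * (2 * (1 + ?u z v) * (1 + ?u y v))"
    using q2 inv_dist_commute[of p v y] inv_dist_nonneg[of p x z] by (intro mult_left_mono) auto
  with q1 show "1 + ?u x y \<le> 4 * ((1 + ?u x z) * (1 + ?u y v)) * (1 + ?u z v)"
    by (simp add: algebra_simps)
  have "2 * (1 + ?u x z) * (1 + ?u x v) \<le> 2 * (1 + ?u x z) * (2 * (1 + ?u x y) * (1 + ?u y v))"
    using q4 inv_dist_nonneg[of p x z] by (intro mult_left_mono) auto
  with q3 show "1 + ?u z v \<le> 4 * ((1 + ?u x z) * (1 + ?u y v)) * (1 + ?u x y)"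
    by (simp add: inv_dist_commute[of p z x] algebra_simps)
  show "?u x y * ?u z v \<le> 4 * (?u x z * ?u y v)" using assms by (intro inv_dist_product_le)
qed (auto intro: inv_dist_nonneg)

end

lemma average_le_average:
  fixes A B C E :: "nat \<Rightarrow> real"
  assumes "1 \<le> k" "\<forall>i\<in>{1..k}. A i + B i \<le> C i + E i + L"
  shows "(1 / real k) * (\<Sum>i=1..k. A i) + (1 / real k) * (\<Sum>i=1..k. B i)
    \<le> (1 / real k) * (\<Sum>i=1..k. C i) + (1 / real k) * (\<Sum>i=1..k. E i) + L"
proof -
  have "(\<Sum>i=1..k. A i + B i) \<le> (\<Sum>i=1..k. C i + E i + L)"
    using assms(2) by (intro sum_mono) auto
  then have "(1 / real k) * ((\<Sum>i=1..k. A i) + (\<Sum>i=1..k. B i))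
      \<le> (1 / real k) * ((\<Sum>i=1..k. C i) + (\<Sum>i=1..k. E i) + real k * L)"
    by (intro mult_left_mono) (auto simp: sum.distrib)
  then show ?thesis using assms(1) by (simp add: algebra_simps)
qed

text \<open>Of the two pairings (xz, yv) and (xv, yz) of a quadruple, one always satisfies the
cross-ratio condition below, so a termwise estimate for that pairing suffices.\<close>

lemma gromov_hyperbolic_average:
  fixes F :: "nat \<Rightarrow> 'a \<Rightarrow> 'a \<Rightarrow> real" and d :: "'a \<Rightarrow> 'a \<Rightarrow> real"
  assumes "1 \<le> k" "0 \<le> \<delta>"
    and commute: "\<And>i x y. F i x y = F i y x"
    and four_point: "\<And>x y z v. x \<in> D \<Longrightarrow> y \<in> D \<Longrightarrow> z \<in> D \<Longrightarrow> v \<in> D \<Longrightarrow>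
        d x v * d y z \<le> d x z * d y v \<Longrightarrow>
        \<forall>i\<in>{1..k}. F i x y + F i z v \<le> F i x z + F i y v + 2 * \<delta>"
  shows "gromov_hyperbolic D (\<lambda>x y. (1 / real k) * (\<Sum>i=1..k. F i x y)) \<delta>"
  unfolding gromov_hyperbolic_def
proof (intro conjI ballI)
  fix x y z v assume D: "x \<in> D" "y \<in> D" "z \<in> D" "v \<in> D"
  let ?t = "\<lambda>x y. (1 / real k) * (\<Sum>i=1..k. F i x y)"
  show "?t x y + ?t z v \<le> max (?t x z + ?t y v) (?t x v + ?t y z) + 2 * \<delta>"
  proof (cases "d x v * d y z \<le> d x z * d y v")
    case True
    from average_le_average[OF assms(1) four_point[OF D True]] show ?thesis by simp
  next
    case False
    then have "\<forall>i\<in>{1..k}. F i x y + F i z v \<le> F i x v + F i y z + 2 * \<delta>"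
      using four_point[OF D(1,2,4,3)] commute by (metis linorder_le_cases)
    from average_le_average[OF assms(1) this] show ?thesis by simp
  qed
qed fact

lemma gromov_hyperbolic_mono:
  "gromov_hyperbolic Y \<rho> \<delta> \<Longrightarrow> \<delta> \<le> \<delta>' \<Longrightarrow> gromov_hyperbolic Y \<rho> \<delta>'"
  unfolding gromov_hyperbolic_def by force

lemma gromov_hyperbolic_avg_ln_inv_dist:
  assumes "Metric_space X d" "1 \<le> k" "\<forall>i\<in>{1..k}. p i \<in> X" "1 \<le> c"
  shows "gromov_hyperbolic (X - p ` {1..k})
    (\<lambda>x y. (1 / real k) * (\<Sum>i=1..k. ln (1 + c * inv_dist d (p i) x y))) (ln (4 * c))"
proof (rule gromov_hyperbolic_average[where d = d])
  interpret Metric_space X d by fact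
  show "ln (1 + c * inv_dist d (p i) x y) = ln (1 + c * inv_dist d (p i) y x)" for i x y
    by (simp add: inv_dist_commute)
  fix x y z v
  assume "x \<in> X - p ` {1..k}" "y \<in> X - p ` {1..k}" "z \<in> X - p ` {1..k}" "v \<in> X - p ` {1..k}"
    and "d x v * d y z \<le> d x z * d y v"
  then show "\<forall>i\<in>{1..k}. ln (1 + c * inv_dist d (p i) x y) + ln (1 + c * inv_dist d (p i) z v)
      \<le> ln (1 + c * inv_dist d (p i) x z) + ln (1 + c * inv_dist d (p i) y v) + 2 * ln (4 * c)"
    using assms(3,4) by (fastforce intro: ln_one_plus_scaled_le inv_dist_four_point inv_dist_nonneg)
qed (use assms in auto)

theorem theorem4p2:
  fixes X :: "'a set" and d :: "'a \<Rightarrow> 'a \<Rightarrow> real" and k :: nat and p :: "nat \<Rightarrow> 'a"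
  assumes "Metric_space X d"
    and "k \<ge> 1"
    and "\<forall>i\<in>{1..k}. p i \<in> X"
  shows "gromov_hyperbolic (X - p ` {1..k}) (tau_hat d k p) (3 * ln 3 + ln 2)
    \<and> (ptolemaic X d \<longrightarrow> gromov_hyperbolic (X - p ` {1..k}) (tau_tilde d k p) (3 * ln 3))"
proof -
  let ?D = "X - p ` {1..k}"
  have "tau_hat d k p = (\<lambda>x y. (1 / real k) * (\<Sum>i=1..k. ln (1 + 2 * inv_dist d (p i) x y)))"
    by (intro ext) (simp add: tau_hat_def inv_dist_def)
  then have hat: "gromov_hyperbolic ?D (tau_hat d k p) (ln 8)"
    using gromov_hyperbolic_avg_ln_inv_dist[OF assms, of 2] by simp
  have "tau_tilde d k p = (\<lambda>x y. (1 / real k) * (\<Sum>i=1..k. ln (1 + 1 * inv_dist d (p i) x y)))"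
    by (intro ext) (simp add: tau_tilde_def inv_dist_def)
  then have tilde: "gromov_hyperbolic ?D (tau_tilde d k p) (ln 4)"
    using gromov_hyperbolic_avg_ln_inv_dist[OF assms, of 1] by simp
  have "ln (54::real) = 3 * ln 3 + ln 2" "ln (27::real) = 3 * ln 3"
    using ln_mult[of 27 2] ln_realpow[of 3 3] by simp_all
  moreover have "ln (8::real) \<le> ln 54" "ln (4::real) \<le> ln 27" by simp_all
  ultimately have "ln 8 \<le> 3 * ln 3 + ln (2::real)" "ln 4 \<le> 3 * ln (3::real)" by linarith+
  with hat tilde show ?thesis by (blast intro: gromov_hyperbolic_mono)
qed

end
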